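(* Assume the setting in the context (Condition ASM). Fix $c>1$, $\bar c=(c+1)/(c-1)$, and let $\widehat\beta$ be a LASSO solution. If $\lambda\geqslant c\,n\|S\|_\infty$, then $$\|\widehat\beta-\beta_0\|_1\leqslant\frac{(1+2\bar c)\sqrt s}{\kappa_{2\bar c}}\Big[\Big(1+\frac1c\Big)\frac{\lambda\sqrt s}{n\kappa_{\bar c}}+2c_s\Big]+\Big(1+\frac{1}{2\bar c}\Big)\frac{2c}{c-1}\frac{n}{\lambda}c_s^2,$$ where $c_s=0$ in the parametric case $f_i=x_i'\beta_0$.
   Context: Condition ASM: observations $(y_i,z_i)$, $i=1,\dots,n$, $z_i$ fixed, $y_i=f(z_i)+\varepsilon_i$, $\varepsilon_i$ i.i.d. $N(0,\sigma^2)$; $f_i=f(z_i)$, $\mathbb{E}_n[a_i]=n^{-1}\sum_ia_i$; $x_i=P(z_i)\in\mathbb{R}^p$ (including a constant) with $\mathbb{E}_n[x_{ij}^2]=1$. $\beta_0$ is any solution of $\min_\beta\mathbb{E}_n[(f_i-x_i'\beta)^2]+\sigma^2\|\beta\|_0/n$; $s=\|\beta_0\|_0$, $T=\mathrm{support}(\beta_0)$, $c_s=\sqrt{\mathbb{E}_n[(f_i-x_i'\beta_0)^2]}\leqslant K\sigma\sqrt{s/n}$ for an absolute constant $K$. $\|\delta\|_{2,n}=\sqrt{\mathbb{E}_n[(x_i'\delta)^2]}$; $S=2\mathbb{E}_n[x_i\varepsilon_i]$; LASSO: $\widehat\beta\in\arg\min_\beta\mathbb{E}_n[(y_i-x_i'\beta)^2]+\frac\lambda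 n\|\beta\|_1$, $\lambda>0$. $\delta_A$ is $\delta$ with entries outside $A$ set to zero. Restricted eigenvalue: for $C>0$, $\kappa_C=\min\{\sqrt s\|\delta\|_{2,n}/\|\delta_T\|_1:\|\delta_{T^c}\|_1\leqslant C\|\delta_T\|_1,\ \delta_T\neq0\}$. *)

theory Defs
  imports "HOL-Probability.Probability"
begin

definition En :: "nat \<Rightarrow> (nat \<Rightarrow> real) \<Rightarrow> real" where
  "En n a = (\<Sum>i<n. a i) / real n"

(* Vectors in R^p are functions nat => real; only coordinates j < p are relevant.
   x i j is the j-th regressor of observation i. *)
definition xdot :: "nat \<Rightarrow> (nat \<Rightarrow> nat \<Rightarrow> real) \<Rightarrow> nat \<Rightarrow> (nat \<Rightarrow> real) \<Rightarrow> real" where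
  "xdot p x i b = (\<Sum>j<p. x i j * b j)"

definition l1norm :: "nat \<Rightarrow> (nat \<Rightarrow> real) \<Rightarrow> real" where
  "l1norm p b = (\<Sum>j<p. \<bar>b j\<bar>)"

definition l0norm :: "nat \<Rightarrow> (nat \<Rightarrow> real) \<Rightarrow> nat" where
  "l0norm p b = card {j. j < p \<and> b j \<noteq> 0}"

definition supp :: "nat \<Rightarrow> (nat \<Rightarrow> real) \<Rightarrow> nat set" where
  "supp p b = {j. j < p \<and> b j \<noteq> 0}"

definition linfnorm :: "nat \<Rightarrow> (nat \<Rightarrow> real) \<Rightarrow> real" where
  "linfnorm p b = Max ((\<lambda>j. \<bar>b j\<bar>) ` {..<p})"

definition restr :: "nat set \<Rightarrow> (nat \<Rightarrow> real) \<Rightarrow> nat \<Rightarrow> real" where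
  "restr A d = (\<lambda>j. if j \<in> A then d j else 0)"

definition norm2n :: "nat \<Rightarrow> nat \<Rightarrow> (nat \<Rightarrow> nat \<Rightarrow> real) \<Rightarrow> (nat \<Rightarrow> real) \<Rightarrow> real" where
  "norm2n n p x d = sqrt (En n (\<lambda>i. (xdot p x i d)\<^sup>2))"

definition lasso_obj :: "nat \<Rightarrow> nat \<Rightarrow> (nat \<Rightarrow> nat \<Rightarrow> real) \<Rightarrow> (nat \<Rightarrow> real) \<Rightarrow> real \<Rightarrow> (nat \<Rightarrow> real) \<Rightarrow> real" where
  "lasso_obj n p x y lam b = En n (\<lambda>i. (y i - xdot p x i b)\<^sup>2) + lam / real n * l1norm p b"

definition is_lasso :: "nat \<Rightarrow> nat \<Rightarrow> (nat \<Rightarrow> nat \<Rightarrow> real) \<Rightarrow> (nat \<Rightarrow> real) \<Rightarrow> real \<Rightarrow> (nat \<Rightarrow> real) \<Rightarrow> bool" where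
  "is_lasso n p x y lam bh \<longleftrightarrow> (\<forall>b. lasso_obj n p x y lam bh \<le> lasso_obj n p x y lam b)"

definition oracle_obj :: "nat \<Rightarrow> nat \<Rightarrow> (nat \<Rightarrow> nat \<Rightarrow> real) \<Rightarrow> (nat \<Rightarrow> real) \<Rightarrow> real \<Rightarrow> (nat \<Rightarrow> real) \<Rightarrow> real" where
  "oracle_obj n p x f \<sigma> b = En n (\<lambda>i. (f i - xdot p x i b)\<^sup>2) + \<sigma>\<^sup>2 * real (l0norm p b) / real n"

definition kappa :: "nat \<Rightarrow> nat \<Rightarrow> (nat \<Rightarrow> nat \<Rightarrow> real) \<Rightarrow> nat set \<Rightarrow> real \<Rightarrow> real" where
  "kappa n p x T C = Inf {sqrt (real (card T)) * norm2n n p x d / l1norm p (restr T d) | d.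
       l1norm p (restr ({..<p} - T) d) \<le> C * l1norm p (restr T d) \<and> (\<exists>j\<in>T. d j \<noteq> 0)}"

end

theory Submission
  imports Defs
begin

text \<open>Comparing the LASSO objective at \<open>\<beta>h\<close> and at \<open>\<beta>0\<close>, and absorbing the noise into the
  penalty on the event \<open>lam \<ge> c n \<parallel>S\<parallel>\<^sub>\<infinity>\<close>, gives for \<open>\<delta> = \<beta>h - \<beta>0\<close> the basic inequality
  \<open>D\<^sup>2 \<le> (lam/n)(1 + 1/c) a - (lam/n)(1 - 1/c) b + 2 c\<^sub>s D\<close>, where \<open>D = norm2n \<delta>\<close>
  and \<open>a\<close>, \<open>b\<close> are the \<open>\<ell>\<^sub>1\<close>-norms of \<open>\<delta>\<close> on and off \<open>T\<close>. If \<open>b \<le> 2 cbar a\<close>, the restricted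
  eigenvalue \<open>\<kappa>(cbar)\<close> bounds \<open>D\<close>, and \<open>\<kappa>(2 cbar)\<close> turns this into a bound on
  \<open>a + b \<le> (1 + 2 cbar) a\<close>.
  Otherwise \<open>b\<close> dominates \<open>a + b\<close>, and the basic inequality together with
  \<open>2 c\<^sub>s D - D\<^sup>2 \<le> c\<^sub>s\<^sup>2\<close> bounds \<open>b\<close> by a multiple of \<open>c\<^sub>s\<^sup>2\<close>.
  The argument is deterministic: the Gaussian model only enters through the event on \<open>lam\<close>.\<close>

lemma En_power2_nonneg: "0 \<le> En n (\<lambda>i. (a i)\<^sup>2)"
  unfolding En_def by (intro divide_nonneg_nonneg sum_nonneg) auto

lemma norm2n_nonneg: "0 \<le> norm2n n p x d"
  unfolding norm2n_def by (rule real_sqrt_ge_zero[OF En_power2_nonneg])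

lemma norm2n_power2: "(norm2n n p x d)\<^sup>2 = En n (\<lambda>i. (xdot p x i d)\<^sup>2)"
  unfolding norm2n_def by (rule real_sqrt_pow2[OF En_power2_nonneg])

lemma En_mult_le_sqrt:
  assumes "0 < n"
  shows "En n (\<lambda>i. a i * b i) \<le> sqrt (En n (\<lambda>i. (a i)\<^sup>2)) * sqrt (En n (\<lambda>i. (b i)\<^sup>2))"
proof -
  have "(\<Sum>i<n. a i * b i)\<^sup>2 \<le> (\<Sum>i<n. (a i)\<^sup>2) * (\<Sum>i<n. (b i)\<^sup>2)"
    by (rule Cauchy_Schwarz_ineq_sum)
  then have "(En n (\<lambda>i. a i * b i))\<^sup>2 \<le> En n (\<lambda>i. (a i)\<^sup>2) * En n (\<lambda>i. (b i)\<^sup>2)"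
    using assms by (simp add: En_def power_divide divide_right_mono power2_eq_square)
  then show ?thesis
    unfolding real_sqrt_mult[symmetric] by (rule real_le_rsqrt)
qed

lemma En_mult_xdot:
  "En n (\<lambda>i. e i * xdot p x i d) = (\<Sum>j<p. d j * En n (\<lambda>i. x i j * e i))"
proof -
  have "(\<Sum>i<n. e i * (\<Sum>j<p. x i j * d j)) = (\<Sum>i<n. \<Sum>j<p. d j * (x i j * e i))"
    by (simp add: sum_distrib_left mult_ac)
  also have "\<dots> = (\<Sum>j<p. d j * (\<Sum>i<n. x i j * e i))"
    by (subst sum.swap) (simp add: sum_distrib_left)
  finally show ?thesis
    unfolding En_def xdot_def by (simp add: sum_divide_distrib[symmetric])
qed

lemma En_mult_xdot_le_l1norm_linfnorm:
  "2 * En n (\<lambda>i. e i * xdot p x i d)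
     \<le> l1norm p d * linfnorm p (\<lambda>j. 2 * En n (\<lambda>i. x i j * e i))"
proof -
  let ?S = "\<lambda>j. 2 * En n (\<lambda>i. x i j * e i)"
  have "2 * En n (\<lambda>i. e i * xdot p x i d) = (\<Sum>j<p. d j * ?S j)"
    by (simp add: En_mult_xdot sum_distrib_left mult_ac)
  also have "\<dots> \<le> (\<Sum>j<p. \<bar>d j\<bar> * linfnorm p ?S)"
  proof (rule sum_mono)
    fix j assume "j \<in> {..<p}"
    then have "\<bar>?S j\<bar> \<le> linfnorm p ?S"
      unfolding linfnorm_def by (intro Max_ge) auto
    then have "\<bar>d j\<bar> * \<bar>?S j\<bar> \<le> \<bar>d j\<bar> * linfnorm p ?S"
      by (rule mult_left_mono) simp
    then show "d j * ?S j \<le> \<bar>d j\<bar> * linfnorm p ?S"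
      using abs_ge_self[of "d j * ?S j"] unfolding abs_mult by linarith
  qed
  also have "\<dots> = l1norm p d * linfnorm p ?S"
    by (simp add: l1norm_def sum_distrib_right)
  finally show ?thesis .
qed

lemma l1norm_nonneg: "0 \<le> l1norm p d"
  unfolding l1norm_def by (simp add: sum_nonneg)

lemma l1norm_restr_split:
  assumes "T \<subseteq> {..<p}"
  shows "l1norm p d = l1norm p (restr T d) + l1norm p (restr ({..<p} - T) d)"
  unfolding l1norm_def restr_def by (simp add: sum.distrib[symmetric]) (rule sum.cong, auto)

lemma l1norm_diff_le_restr:
  assumes "supp p \<beta>0 \<subseteq> T"
  shows "l1norm p \<beta>0 - l1norm p \<beta>
     \<le> l1norm p (restr T (\<lambda>j. \<beta> j - \<beta>0 j)) - l1norm p (restr ({..<p} - T) (\<lambda>j. \<beta> j - \<beta>0 j))"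
proof -
  have "\<bar>\<beta>0 j\<bar> - \<bar>\<beta> j\<bar>
      \<le> \<bar>restr T (\<lambda>j. \<beta> j - \<beta>0 j) j\<bar> - \<bar>restr ({..<p} - T) (\<lambda>j. \<beta> j - \<beta>0 j) j\<bar>"
    if "j < p" for j
    using assms that by (cases "j \<in> T") (auto simp: restr_def supp_def)
  then show ?thesis
    unfolding l1norm_def sum_subtractf[symmetric] by (intro sum_mono) auto
qed

lemma lasso_optimality_inequality:
  fixes n p :: nat and x :: "nat \<Rightarrow> nat \<Rightarrow> real" and e f \<beta>0 \<beta>h :: "nat \<Rightarrow> real"
  defines "\<delta> \<equiv> \<lambda>j. \<beta>h j - \<beta>0 j"
  assumes lasso: "is_lasso n p x (\<lambda>i. f i + e i) lam \<beta>h"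
  shows "(norm2n n p x \<delta>)\<^sup>2
     \<le> 2 * En n (\<lambda>i. e i * xdot p x i \<delta>) + 2 * En n (\<lambda>i. (f i - xdot p x i \<beta>0) * xdot p x i \<delta>)
        + lam / real n * (l1norm p \<beta>0 - l1norm p \<beta>h)"
proof -
  define r where "r = (\<lambda>i. f i - xdot p x i \<beta>0)"
  define u where "u = (\<lambda>i. xdot p x i \<delta>)"
  have "xdot p x i \<beta>h = xdot p x i \<beta>0 + u i" for i
    unfolding u_def xdot_def \<delta>_def by (simp add: sum.distrib[symmetric] algebra_simps)
  then have "(f i + e i - xdot p x i \<beta>h)\<^sup>2
      = (f i + e i - xdot p x i \<beta>0)\<^sup>2 + (u i)\<^sup>2 - 2 * (e i * u i) - 2 * (r i * u i)" for i
    unfolding r_def by (simp add: power2_eq_square algebra_simps)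
  then have expand: "En n (\<lambda>i. (f i + e i - xdot p x i \<beta>h)\<^sup>2)
      = En n (\<lambda>i. (f i + e i - xdot p x i \<beta>0)\<^sup>2) + En n (\<lambda>i. (u i)\<^sup>2)
        - 2 * En n (\<lambda>i. e i * u i) - 2 * En n (\<lambda>i. r i * u i)"
    unfolding En_def
    by (simp add: sum.distrib sum_subtractf sum_distrib_left[symmetric] diff_divide_distrib add_divide_distrib)
  have "lasso_obj n p x (\<lambda>i. f i + e i) lam \<beta>h \<le> lasso_obj n p x (\<lambda>i. f i + e i) lam \<beta>0"
    using lasso unfolding is_lasso_def by blast
  then show ?thesis
    unfolding lasso_obj_def expand norm2n_power2 u_def r_def by (simp add: algebra_simps)
qed

lemma lasso_basic_inequality:
  fixes n p :: nat and x :: "nat \<Rightarrow> nat \<Rightarrow> real" and e f \<beta>0 \<beta>h :: "nat \<Rightarrow> real"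
  defines "\<delta> \<equiv> \<lambda>j. \<beta>h j - \<beta>0 j"
    and "cs \<equiv> sqrt (En n (\<lambda>i. (f i - xdot p x i \<beta>0)\<^sup>2))"
  assumes n: "0 < n" and c: "0 < c" and lam: "0 \<le> lam"
    and lasso: "is_lasso n p x (\<lambda>i. f i + e i) lam \<beta>h"
    and penalty: "c * real n * linfnorm p (\<lambda>j. 2 * En n (\<lambda>i. x i j * e i)) \<le> lam"
    and T: "supp p \<beta>0 \<subseteq> T" "T \<subseteq> {..<p}"
  shows "(norm2n n p x \<delta>)\<^sup>2
     \<le> lam / real n * (1 + 1 / c) * l1norm p (restr T \<delta>)
        - lam / real n * (1 - 1 / c) * l1norm p (restr ({..<p} - T) \<delta>)
        + 2 * cs * norm2n n p x \<delta>"
proof -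
  define a where "a = l1norm p (restr T \<delta>)"
  define b where "b = l1norm p (restr ({..<p} - T) \<delta>)"
  have n0: "0 < real n" using n by simp
  have "linfnorm p (\<lambda>j. 2 * En n (\<lambda>i. x i j * e i)) \<le> lam / (c * real n)"
    using penalty c n0 by (simp add: pos_le_divide_eq mult_ac)
  then have "l1norm p \<delta> * linfnorm p (\<lambda>j. 2 * En n (\<lambda>i. x i j * e i)) \<le> (a + b) * (lam / (c * real n))"
    using l1norm_restr_split[OF T(2), of \<delta>] l1norm_nonneg[of p \<delta>]
    unfolding a_def b_def by (metis mult_left_mono)
  then have noise: "2 * En n (\<lambda>i. e i * xdot p x i \<delta>) \<le> (a + b) * (lam / (c * real n))"
    using En_mult_xdot_le_l1norm_linfnorm[of n e p x \<delta>] by linarith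
  have approx: "En n (\<lambda>i. (f i - xdot p x i \<beta>0) * xdot p x i \<delta>) \<le> cs * norm2n n p x \<delta>"
    using En_mult_le_sqrt[OF n] unfolding cs_def norm2n_def .
  have "lam / real n * (l1norm p \<beta>0 - l1norm p \<beta>h) \<le> lam / real n * (a - b)"
    using l1norm_diff_le_restr[OF T(1), of \<beta>h] n0 lam
    unfolding a_def b_def \<delta>_def by (intro mult_left_mono) auto
  moreover have "(a + b) * (lam / (c * real n)) + lam / real n * (a - b)
       = lam / real n * (1 + 1 / c) * a - lam / real n * (1 - 1 / c) * b"
    using c n0 by (simp add: field_simps)
  ultimately show ?thesis
    using lasso_optimality_inequality[where ?\<beta>0.0 = \<beta>0, OF lasso] noise approx unfolding a_def b_def \<delta>_def by linarith
qed

lemma kappa_mult_le: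
  assumes cone: "l1norm p (restr ({..<p} - T) d) \<le> C * l1norm p (restr T d)"
    and pos: "0 < l1norm p (restr T d)"
  shows "kappa n p x T C * l1norm p (restr T d) \<le> sqrt (real (card T)) * norm2n n p x d"
proof -
  let ?R = "{sqrt (real (card T)) * norm2n n p x d / l1norm p (restr T d) | d.
     l1norm p (restr ({..<p} - T) d) \<le> C * l1norm p (restr T d) \<and> (\<exists>j\<in>T. d j \<noteq> 0)}"
  have "\<exists>j\<in>T. d j \<noteq> 0"
    using pos unfolding l1norm_def restr_def by (auto intro: ccontr simp: sum.neutral)
  then have "sqrt (real (card T)) * norm2n n p x d / l1norm p (restr T d) \<in> ?R"
    using cone by blast
  moreover have "bdd_below ?R"
    by (rule bdd_belowI[of _ 0]) (auto intro!: divide_nonneg_nonneg mult_nonneg_nonneg l1norm_nonneg norm2n_nonneg)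
  ultimately have "kappa n p x T C \<le> sqrt (real (card T)) * norm2n n p x d / l1norm p (restr T d)"
    unfolding kappa_def by (rule cInf_lower)
  then show ?thesis
    using pos by (simp add: pos_le_divide_eq)
qed

lemma sq_le_mult_imp_le:
  fixes D q :: real
  assumes "0 \<le> D" "0 \<le> q" "D\<^sup>2 \<le> q * D"
  shows "D \<le> q"
  using assms by (cases "D = 0") (auto simp: power2_eq_square)

lemma l0norm_pos_of_l1norm_restr_supp_pos:
  assumes "0 < l1norm p (restr (supp p \<beta>) d)"
  shows "0 < l0norm p \<beta>"
proof (rule ccontr)
  assume "\<not> 0 < l0norm p \<beta>"
  then have "supp p \<beta> = {}"
    unfolding l0norm_def supp_def by simp
  with assms show False
    unfolding l1norm_def restr_def by simp
qed

lemma basic_inequality_cone_form: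
  fixes c :: real
  assumes "1 < c"
  shows "A * (1 + 1 / c) * a - A * (1 - 1 / c) * b = A * (1 - 1 / c) * ((c + 1) / (c - 1) * a - b)"
  using assms by (simp add: field_simps)

lemma prediction_norm_le_of_basic_inequality:
  fixes a b D cs lam m c k r :: real
  assumes lam: "0 < lam" and m: "0 < m" and c: "1 < c"
    and nonneg: "0 \<le> a" "0 \<le> b" "0 \<le> D" "0 \<le> cs" "0 \<le> r / k"
    and basic: "D\<^sup>2 \<le> lam / m * (1 + 1 / c) * a - lam / m * (1 - 1 / c) * b + 2 * cs * D"
    and re: "0 < a \<Longrightarrow> b \<le> (c + 1) / (c - 1) * a \<Longrightarrow> 0 < k \<and> k * a \<le> r * D"
  shows "D \<le> (1 + 1 / c) * lam * r / (m * k) + 2 * cs"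
proof -
  have "0 \<le> (1 + 1 / c) * (lam / m) * (r / k)"
    using nonneg(5) lam m c by (intro mult_nonneg_nonneg) auto
  moreover have "(1 + 1 / c) * lam * r / (m * k) = (1 + 1 / c) * (lam / m) * (r / k)"
    by simp
  ultimately have first_nonneg: "0 \<le> (1 + 1 / c) * lam * r / (m * k)"
    by (simp only:)
  show ?thesis
  proof (cases "0 < a \<and> b \<le> (c + 1) / (c - 1) * a")
    case True
    with re have k: "0 < k" "a \<le> r * D / k" by (auto simp: pos_le_divide_eq mult.commute)
    have "0 \<le> lam / m * (1 - 1 / c) * b"
      using lam m c nonneg(2) by (intro mult_nonneg_nonneg) auto
    then have "D\<^sup>2 \<le> lam / m * (1 + 1 / c) * a + 2 * cs * D"
      using basic by linarith
    also have "\<dots> \<le> lam / m * (1 + 1 / c) * (r * D / k) + 2 * cs * D"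
      using k lam m c by (intro add_right_mono mult_left_mono) auto
    also have "\<dots> = ((1 + 1 / c) * lam * r / (m * k) + 2 * cs) * D"
      using k(1) m by (simp add: field_simps)
    finally show ?thesis
      using first_nonneg nonneg by (intro sq_le_mult_imp_le[of D]) auto
  next
    case off_cone: False
    have "(c + 1) / (c - 1) * a - b \<le> 0"
    proof (cases "a = 0")
      case True
      with nonneg(2) show ?thesis by simp
    next
      case False
      with off_cone nonneg(1) show ?thesis by linarith
    qed
    then have "lam / m * (1 - 1 / c) * ((c + 1) / (c - 1) * a - b) \<le> 0"
      using lam m c by (intro mult_nonneg_nonpos) auto
    then have "D\<^sup>2 \<le> 2 * cs * D"
      using basic basic_inequality_cone_form[OF c, of "lam / m" a b] by linarith
    then have "D \<le> 2 * cs"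
      using nonneg by (intro sq_le_mult_imp_le[of D]) auto
    then show ?thesis
      using first_nonneg by linarith
  qed
qed

lemma off_cone_l1norm_le_of_basic_inequality:
  fixes a b D cs lam m c :: real
  assumes lam: "0 < lam" and m: "0 < m" and c: "1 < c"
    and basic: "D\<^sup>2 \<le> lam / m * (1 + 1 / c) * a - lam / m * (1 - 1 / c) * b + 2 * cs * D"
    and off_cone: "2 * ((c + 1) / (c - 1)) * a \<le> b"
  shows "b \<le> 2 * c / (c - 1) * (m / lam) * cs\<^sup>2"
proof -
  have "(c + 1) / (c - 1) * a - b \<le> - b / 2"
    using off_cone unfolding mult.assoc by linarith
  then have "lam / m * (1 - 1 / c) * ((c + 1) / (c - 1) * a - b) \<le> lam / m * (1 - 1 / c) * (- b / 2)"
    using lam m c by (intro mult_left_mono) auto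
  also have "\<dots> = - (lam / m * (1 - 1 / c) * (b / 2))"
    by simp
  finally have "lam / m * (1 - 1 / c) * ((c + 1) / (c - 1) * a - b) \<le> - (lam / m * (1 - 1 / c) * (b / 2))" .
  moreover have "2 * cs * D - D\<^sup>2 \<le> cs\<^sup>2"
    using sum_power2_ge_zero[of "cs - D" 0] by (simp add: power2_eq_square algebra_simps)
  ultimately have "lam / m * (1 - 1 / c) * (b / 2) \<le> cs\<^sup>2"
    using basic basic_inequality_cone_form[OF c, of "lam / m" a b] by linarith
  then show ?thesis
    using lam m c by (simp add: field_simps)
qed

lemma l1norm_le_of_basic_inequality:
  fixes a b D cs lam m c k1 k2 r :: real
  defines "cbar \<equiv> (c + 1) / (c - 1)"
  assumes lam: "0 < lam" and m: "0 < m" and c: "1 < c"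
    and nonneg: "0 \<le> a" "0 \<le> b" "0 \<le> D" "0 \<le> cs" "0 \<le> r / k1" "0 \<le> r / k2"
    and basic: "D\<^sup>2 \<le> lam / m * (1 + 1 / c) * a - lam / m * (1 - 1 / c) * b + 2 * cs * D"
    and re1: "0 < a \<Longrightarrow> b \<le> cbar * a \<Longrightarrow> 0 < k1 \<and> k1 * a \<le> r * D"
    and re2: "0 < a \<Longrightarrow> b \<le> 2 * cbar * a \<Longrightarrow> 0 < k2 \<and> k2 * a \<le> r * D"
  shows "a + b \<le> (1 + 2 * cbar) * r / k2 * ((1 + 1 / c) * lam * r / (m * k1) + 2 * cs)
                 + (1 + 1 / (2 * cbar)) * (2 * c / (c - 1)) * (m / lam) * cs\<^sup>2"
proof -
  define P where "P = (1 + 1 / c) * lam * r / (m * k1) + 2 * cs"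
  have cbar: "1 < cbar"
    using c by (simp add: cbar_def field_simps)
  have DP: "D \<le> P"
    unfolding P_def using lam m c nonneg(1-5) basic re1[unfolded cbar_def]
    by (rule prediction_norm_le_of_basic_inequality)
  have "0 \<le> (1 + 2 * cbar) * (r / k2) * P"
    using cbar nonneg DP by (intro mult_nonneg_nonneg) auto
  moreover have "(1 + 2 * cbar) * r / k2 * P = (1 + 2 * cbar) * (r / k2) * P"
    by simp
  ultimately have first_nonneg: "0 \<le> (1 + 2 * cbar) * r / k2 * P"
    by (simp only:)
  have second_nonneg: "0 \<le> (1 + 1 / (2 * cbar)) * (2 * c / (c - 1)) * (m / lam) * cs\<^sup>2"
    using cbar c m lam by (intro mult_nonneg_nonneg) auto
  show ?thesis
  proof (cases "b \<le> 2 * cbar * a")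
    case cone: True
    have "a + b \<le> (1 + 2 * cbar) * r / k2 * P"
    proof (cases "a = 0")
      case True
      with cone nonneg(2) first_nonneg show ?thesis by simp
    next
      case False
      with nonneg(1) re2 cone have k2: "0 < k2" "a \<le> r * D / k2"
        by (auto simp: pos_le_divide_eq mult.commute)
      have "a + b \<le> (1 + 2 * cbar) * a"
        using cone by (simp add: algebra_simps)
      also have "\<dots> \<le> (1 + 2 * cbar) * (r * D / k2)"
        using k2 cbar by (intro mult_left_mono) auto
      also have "\<dots> \<le> (1 + 2 * cbar) * (r * P / k2)"
        using DP k2 cbar nonneg(6) by (intro mult_left_mono divide_right_mono) (auto simp: zero_le_divide_iff)
      finally show ?thesis
        by simp
    qed
    with second_nonneg show ?thesis
      unfolding P_def by linarith
  next
    case off_cone: False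
    have "b \<le> 2 * c / (c - 1) * (m / lam) * cs\<^sup>2"
      using lam m c basic off_cone unfolding cbar_def
      by (intro off_cone_l1norm_le_of_basic_inequality) auto
    then have "(1 + 1 / (2 * cbar)) * b \<le> (1 + 1 / (2 * cbar)) * (2 * c / (c - 1) * (m / lam) * cs\<^sup>2)"
      by (rule mult_left_mono) (use cbar in auto)
    moreover have "a + b \<le> (1 + 1 / (2 * cbar)) * b"
      using off_cone cbar by (simp add: field_simps)
    ultimately show ?thesis
      using first_nonneg unfolding P_def by (simp add: mult.assoc)
  qed
qed

theorem lemma7:
  fixes M :: "'a measure"
    and n p :: nat
    and x :: "nat \<Rightarrow> nat \<Rightarrow> real"
    and f :: "nat \<Rightarrow> real"
    and \<epsilon> :: "nat \<Rightarrow> 'a \<Rightarrow> real"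
    and \<sigma> K c lam :: real
    and \<beta>0 \<beta>h :: "nat \<Rightarrow> real"
    and \<omega> :: 'a
  assumes n_pos: "0 < n" and p_pos: "0 < p"
    and prob: "prob_space M"
    and sigma_pos: "0 < \<sigma>"
    and eps_rv: "\<forall>i<n. distributed M lborel (\<epsilon> i) (normal_density 0 \<sigma>)"
    and eps_indep: "prob_space.indep_vars M (\<lambda>_. borel) \<epsilon> {..<n}"
    and const: "\<exists>j<p. \<forall>i<n. x i j = 1"
    and normalized: "\<forall>j<p. En n (\<lambda>i. (x i j)\<^sup>2) = 1"
    and beta0_min: "\<forall>b. oracle_obj n p x f \<sigma> \<beta>0 \<le> oracle_obj n p x f \<sigma> b"
    and cs_bound: "sqrt (En n (\<lambda>i. (f i - xdot p x i \<beta>0)\<^sup>2))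
                     \<le> K * \<sigma> * sqrt (real (l0norm p \<beta>0) / real n)"
    and c_gt1: "1 < c"
    and lam_pos: "0 < lam"
    and omega: "\<omega> \<in> space M"
    and lasso: "is_lasso n p x (\<lambda>i. f i + \<epsilon> i \<omega>) lam \<beta>h"
    and kappa1_pos: "0 < l0norm p \<beta>0 \<Longrightarrow>
          0 < kappa n p x (supp p \<beta>0) ((c + 1) / (c - 1))"
    and kappa2_pos: "0 < l0norm p \<beta>0 \<Longrightarrow>
          0 < kappa n p x (supp p \<beta>0) (2 * ((c + 1) / (c - 1)))"
    and lam_event: "c * real n * linfnorm p (\<lambda>j. 2 * En n (\<lambda>i. x i j * \<epsilon> i \<omega>)) \<le> lam"
  shows "let cbar = (c + 1) / (c - 1);
             s = real (l0norm p \<beta>0);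
             T = supp p \<beta>0;
             cs = sqrt (En n (\<lambda>i. (f i - xdot p x i \<beta>0)\<^sup>2))
         in l1norm p (\<lambda>j. \<beta>h j - \<beta>0 j)
            \<le> (1 + 2 * cbar) * sqrt s / kappa n p x T (2 * cbar)
                 * ((1 + 1 / c) * lam * sqrt s / (real n * kappa n p x T cbar) + 2 * cs)
               + (1 + 1 / (2 * cbar)) * (2 * c / (c - 1)) * (real n / lam) * cs\<^sup>2"
proof -
  define cbar where "cbar = (c + 1) / (c - 1)"
  define T where "T = supp p \<beta>0"
  define s where "s = real (l0norm p \<beta>0)"
  define \<delta> where "\<delta> = (\<lambda>j. \<beta>h j - \<beta>0 j)"
  have T: "supp p \<beta>0 \<subseteq> T" "T \<subseteq> {..<p}" "real (card T) = s"
    unfolding T_def s_def supp_def l0norm_def by auto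
  have basic: "(norm2n n p x \<delta>)\<^sup>2
      \<le> lam / real n * (1 + 1 / c) * l1norm p (restr T \<delta>)
         - lam / real n * (1 - 1 / c) * l1norm p (restr ({..<p} - T) \<delta>)
         + 2 * sqrt (En n (\<lambda>i. (f i - xdot p x i \<beta>0)\<^sup>2)) * norm2n n p x \<delta>"
    unfolding \<delta>_def using n_pos c_gt1 lam_pos lasso lam_event T(1,2)
    by (intro lasso_basic_inequality) auto
  have re: "0 < kappa n p x T C \<and> kappa n p x T C * l1norm p (restr T \<delta>) \<le> sqrt s * norm2n n p x \<delta>"
    if "0 < l0norm p \<beta>0 \<Longrightarrow> 0 < kappa n p x T C" "0 < l1norm p (restr T \<delta>)"
      "l1norm p (restr ({..<p} - T) \<delta>) \<le> C * l1norm p (restr T \<delta>)" for C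
    using that kappa_mult_le[of p T \<delta> C n x, unfolded T(3)]
      l0norm_pos_of_l1norm_restr_supp_pos[of p \<beta>0 \<delta>, folded T_def]
    by auto
  \<comment> \<open>For \<open>s = 0\<close> the infimum defining \<open>\<kappa>\<close> is over the empty set, but \<open>sqrt s = 0\<close>.\<close>
  have ratio_nonneg: "0 \<le> sqrt s / kappa n p x T C" if "0 < l0norm p \<beta>0 \<Longrightarrow> 0 < kappa n p x T C" for C
    using that unfolding s_def by (cases "l0norm p \<beta>0 = 0") auto
  show ?thesis
    unfolding Let_def cbar_def[symmetric] T_def[symmetric] s_def[symmetric] \<delta>_def[symmetric]
      l1norm_restr_split[OF T(2), of \<delta>]
    using lam_pos n_pos c_gt1 l1norm_nonneg norm2n_nonneg real_sqrt_ge_zero[OF En_power2_nonneg] basic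
      ratio_nonneg[OF kappa1_pos[folded T_def cbar_def]] ratio_nonneg[OF kappa2_pos[folded T_def cbar_def]]
      re[OF kappa1_pos[folded T_def cbar_def]] re[OF kappa2_pos[folded T_def cbar_def]]
    unfolding cbar_def
    by (intro l1norm_le_of_basic_inequality) (auto simp: mult.assoc)
qed

end
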